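(* Consider the resilient constrained consensus algorithm described in the context, with at most $f$ Byzantine agents. Suppose $\mathcal X=\bigcap_{i\in\mathcal H}\mathcal X_i=\{x^*\}$ is a singleton, and suppose the set of normal agents $\mathcal H$ is $k$-redundant. Suppose there is a constant $\mu>0$ such that for every $x\in\mathbb R^m$ and every $\mathcal S\subseteq\mathcal H$ with $|\mathcal S|\ge n-k$, $$\max_{i\in\mathcal S}\mathrm{dist}(x,\mathcal X_i)\ \ge\ \mu\,\mathrm{dist}\Big(x,\bigcap_{i\in\mathcal S}\mathcal X_i\Big).$$ If $k>\frac{4f}{\mu^2}+2f-1$ and $0<\alpha<\frac{\mu^2k-2f\mu^2-4f+\mu^2}{4|\mathcal H|^3}$, then there is a constant $\rho\in(0,1)$ such that for all $t\ge 0$ $$\sum_{i\in\mathcal H}\|x_i(t)-x^*\|^2\le\rho^t\sum_{i\in\mathcal H}\|x_i(0)-x^*\|^2.$$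
   Context: Setting: There are $n$ agents $\mathcal N=\{1,\dots,n\}$, and every agent can communicate with every other agent (complete graph). An integer $f\ge 0$ is known to all agents. The agents are partitioned into normal agents $\mathcal H$ and Byzantine agents $\mathcal F$ with $|\mathcal F|\le f$, so $|\mathcal H|\ge n-f$. Each normal agent $i\in\mathcal H$ has a nonempty closed convex set $\mathcal X_i\subseteq\mathbb R^m$. Each normal agent's state is constrained to lie in $\mathcal X_i$; in particular $x_i(0)\in\mathcal X_i$. Algorithm (discrete time $t=0,1,2,\dots$): each normal agent $i$ has a state $x_i(t)\in\mathbb R^m$. At time $t$, agent $i$ receives a vector $x_{ji}(t)$ from each $j\in\mathcal N\setminus\{i\}$. If $j\in\mathcal H$, then $x_{ji}(t)=x_j(t)$. If $j\in\mathcal F$, then $x_{ji}(t)$ is arbitrary and may differ for different recipients. Agent $i$ discards the $f$ received vectors with the largest distance $\|x_i(t)-x_{ji}(t)\|$, with ties broken arbitrarily. Let $\mathcal M_i(t)\subseteq\mathcal N\setminus\{i\}$ be the set of the remaining $n-f-1$ senders. The update is $$x_i(t+1)=\mathrm P_{\mathcal X_i}\Big[x_i(t)+\alpha\sum_{j\in\mathcal M_i(t)}(x_{ji}(t)-x_i(t))\Big],$$ with $\alpha>0$ and $\mathrm P_{\mathcal C}$ the Euclidean projection onto $\mathcal C$. Definitions: $\mathrm{dist}(x,\mathcal C)=\|x-\mathrm P_{\mathcal C}[x]\|$. $\mathcal H$ is $k$-redundant if for every $\mathcal S\subseteq\mathcal H$ with $|\mathcal S|\ge n-k$ we have $\bigcap_{i\in\mathcal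 S}\mathcal X_i=\bigcap_{i\in\mathcal H}\mathcal X_i$. *)

theory Defs
  imports "HOL-Analysis.Analysis"
begin

definition proj :: "'a::euclidean_space set \<Rightarrow> 'a \<Rightarrow> 'a" where
  "proj C x = closest_point C x"

definition dist_set :: "'a::euclidean_space \<Rightarrow> 'a set \<Rightarrow> real" where
  "dist_set x C = norm (x - proj C x)"

definition k_redundant :: "nat \<Rightarrow> nat \<Rightarrow> nat set \<Rightarrow> (nat \<Rightarrow> 'a set) \<Rightarrow> bool" where
  "k_redundant n k H X \<longleftrightarrow>
     (\<forall>S. S \<subseteq> H \<and> int (card S) \<ge> int n - int k \<longrightarrow> (\<Inter>i\<in>S. X i) = (\<Inter>i\<in>H. X i))"

text \<open>The trimming rule: agent i keeps the set M of senders after discarding the f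
received vectors farthest from its own state (ties broken arbitrarily).\<close>
definition valid_trim ::
  "nat \<Rightarrow> nat \<Rightarrow> nat \<Rightarrow> 'a::euclidean_space \<Rightarrow> (nat \<Rightarrow> 'a) \<Rightarrow> nat set \<Rightarrow> bool" where
  "valid_trim n f i xi recv M \<longleftrightarrow>
     M \<subseteq> {1..n} - {i} \<and> card ({1..n} - {i} - M) = f \<and>
     (\<forall>j\<in>M. \<forall>j'\<in>{1..n} - {i} - M. norm (xi - recv j) \<le> norm (xi - recv j'))"

end

theory Submission
  imports Defs
begin

text \<open>Lyapunov argument for \<open>V = (\<Sum>i\<in>H. \<parallel>x\<^sub>i - x\<^sup>*\<parallel>\<^sup>2)\<close>. Projection onto
\<open>X\<^sub>i \<ni> x\<^sup>*\<close> is non-expansive towards \<open>x\<^sup>*\<close>, so it suffices to bound the unprojected step.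
By polarization \<open>2 \<langle>x\<^sub>i - x\<^sup>*, x\<^sub>j - x\<^sub>i\<rangle> = \<parallel>x\<^sub>j - x\<^sup>*\<parallel>\<^sup>2 - \<parallel>x\<^sub>i - x\<^sup>*\<parallel>\<^sup>2 - \<parallel>x\<^sub>j - x\<^sub>i\<parallel>\<^sup>2\<close>, and the
differences of the first two terms cancel when summed over all pairs of normal agents.
Trimming keeps a Byzantine value only if it is no farther from \<open>x\<^sub>i\<close> than some discarded
normal value, which costs at most \<open>4 f \<parallel>x\<^sub>i - x\<^sup>*\<parallel>\<^sup>2\<close>. Redundancy and the error bound give
every set of \<open>n - k\<close> normal agents a state at distance \<open>\<ge> \<mu> \<parallel>x\<^sub>i - x\<^sup>*\<parallel>\<close> from \<open>x\<^sub>i\<close>, so at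
least \<open>k - 2f + 1\<close> kept normal neighbours are that far, a gain of
\<open>\<mu>\<^sup>2 (k - 2f + 1) \<parallel>x\<^sub>i - x\<^sup>*\<parallel>\<^sup>2\<close>. The second-order term is at most \<open>4 \<alpha>\<^sup>2 |H|\<^sup>3 V\<close>, so \<open>V\<close>
contracts by the factor \<open>1 - \<alpha> (c - 4 \<alpha> |H|\<^sup>3)\<close>, \<open>c\<close> being the numerator of the bound on \<open>\<alpha>\<close>.\<close>

lemma sum_le_sum_if_card_le:
  fixes g h :: "'b \<Rightarrow> real"
  assumes "finite A" "finite B" "card A \<le> card B"
    and le: "\<And>a b. a \<in> A \<Longrightarrow> b \<in> B \<Longrightarrow> g a \<le> h b"
    and nonneg: "\<And>b. b \<in> B \<Longrightarrow> 0 \<le> h b"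
  shows "sum g A \<le> sum h B"
proof (cases "A = {}")
  case True
  then show ?thesis using nonneg by (simp add: sum_nonneg)
next
  case False
  then have "B \<noteq> {}" using assms(1,3) by auto
  define m where "m = Min (h ` B)"
  have m_in: "m \<in> h ` B" and m_le: "\<And>b. b \<in> B \<Longrightarrow> m \<le> h b"
    using \<open>B \<noteq> {}\<close> \<open>finite B\<close> by (simp_all add: m_def)
  have "sum g A \<le> real (card A) * m"
    using sum_bounded_above[of A g m] le m_in by force
  also have "\<dots> \<le> real (card B) * m"
    using assms(3) m_in nonneg by (auto intro: mult_right_mono)
  also have "\<dots> \<le> sum h B"
    using sum_bounded_below[of B m h] m_le by simp
  finally show ?thesis .
qed

lemma sum_pairwise_diff_eq_0:
  fixes b :: "'b \<Rightarrow> real"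
  assumes "finite H"
  shows "(\<Sum>i\<in>H. \<Sum>j\<in>H - {i}. b j - b i) = 0"
proof -
  have "(\<Sum>j\<in>H - {i}. b j - b i) = (\<Sum>j\<in>H. b j - b i)" if "i \<in> H" for i
    using assms that by (simp add: sum.remove)
  then have "(\<Sum>i\<in>H. \<Sum>j\<in>H - {i}. b j - b i) = (\<Sum>i\<in>H. \<Sum>j\<in>H. b j - b i)"
    by simp
  also have "\<dots> = real (card H) * sum b H - real (card H) * sum b H"
    by (simp add: sum_subtractf sum_distrib_left)
  finally show ?thesis by simp
qed

lemma sum_with_pairwise_diffs_eq:
  fixes b :: "'b \<Rightarrow> real"
  assumes "finite H"
  shows "(\<Sum>i\<in>H. b i + \<alpha> * ((\<Sum>j\<in>H - {i}. b j - b i) - c * b i) + \<beta>)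
    = (1 - \<alpha> * c) * sum b H + real (card H) * \<beta>"
  using sum_pairwise_diff_eq_0[OF assms, of b]
  by (simp add: sum.distrib sum_subtractf sum_distrib_left[symmetric] algebra_simps)

lemma geometric_decay_if_contraction:
  fixes V :: "nat \<Rightarrow> real"
  assumes step: "\<And>t. V (Suc t) \<le> q * V t" and nonneg: "\<And>t. 0 \<le> V t" and "q < 1"
  shows "\<exists>\<rho>. 0 < \<rho> \<and> \<rho> < 1 \<and> (\<forall>t. V t \<le> \<rho> ^ t * V 0)"
proof (intro exI conjI allI)
  let ?\<rho> = "max (1/2) q"
  show "0 < ?\<rho>" "?\<rho> < 1" using \<open>q < 1\<close> by auto
  show "V t \<le> ?\<rho> ^ t * V 0" for t
  proof (induction t)
    case (Suc t)
    have "V (Suc t) \<le> ?\<rho> * V t"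
      using step[of t] nonneg[of t] by (meson max.cobounded2 mult_right_mono order_trans)
    also have "\<dots> \<le> ?\<rho> * (?\<rho> ^ t * V 0)"
      using Suc by (simp add: mult_left_mono)
    finally show ?case by simp
  qed simp
qed

lemma two_inner_eq_power2_norm_diff:
  fixes y w z :: "'a::real_inner"
  shows "2 * inner (y - z) (w - y) = (norm (w - z))\<^sup>2 - (norm (y - z))\<^sup>2 - (norm (w - y))\<^sup>2"
  by (simp add: power2_norm_eq_inner inner_diff_left inner_diff_right inner_commute algebra_simps)

lemma proj_in: "closed C \<Longrightarrow> C \<noteq> {} \<Longrightarrow> proj C v \<in> C"
  unfolding proj_def by (rule closest_point_in_set)

lemma dist_set_singleton: "dist_set y {z} = norm (y - z)"
  unfolding dist_set_def proj_def using closest_point_in_set[of "{z}" y] by auto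

lemma dist_set_le_norm: "closed C \<Longrightarrow> z \<in> C \<Longrightarrow> dist_set y C \<le> norm (y - z)"
  unfolding dist_set_def proj_def using closest_point_le[of C z y] by (simp add: dist_norm)

lemma norm_proj_diff_le:
  assumes "convex C" "closed C" "z \<in> C"
  shows "norm (proj C v - z) \<le> norm (v - z)"
  using closest_point_lipschitz[OF assms(1,2), of v z] closest_point_self[OF assms(3)] assms(3)
  unfolding proj_def by (auto simp: dist_norm)

lemma power2_norm_proj_step_le:
  assumes "convex C" "closed C" "z \<in> C"
  shows "(norm (proj C (w + a *\<^sub>R u) - z))\<^sup>2
    \<le> (norm (w - z))\<^sup>2 + 2 * a * inner (w - z) u + a\<^sup>2 * (norm u)\<^sup>2"
proof -
  have "(norm (proj C (w + a *\<^sub>R u) - z))\<^sup>2 \<le> (norm ((w - z) + a *\<^sub>R u))\<^sup>2"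
    using norm_proj_diff_le[OF assms, of "w + a *\<^sub>R u"] by (simp add: power_mono algebra_simps)
  also have "\<dots> = inner ((w - z) + a *\<^sub>R u) ((w - z) + a *\<^sub>R u)"
    by (simp only: power2_norm_eq_inner)
  also have "\<dots> = (norm (w - z))\<^sup>2 + 2 * a * inner (w - z) u + a\<^sup>2 * (norm u)\<^sup>2"
    by (simp only: power2_norm_eq_inner inner_add_left inner_add_right inner_scaleR_left
        inner_scaleR_right inner_commute[of u "w - z"]) (simp add: algebra_simps power2_eq_square)
  finally show ?thesis .
qed

lemma valid_trim_cards:
  assumes H: "H \<subseteq> {1..n}" and byz: "card ({1..n} - H) \<le> f" and i: "i \<in> H"
    and trim: "valid_trim n f i w r M"
  shows valid_trim_card_byzantine_le: "card (M - H) \<le> card (H - {i} - M)"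
    and valid_trim_card_discarded_le: "card (H - {i} - M) \<le> f"
    and valid_trim_card_kept_normal_ge: "n \<le> card (M \<inter> H) + 2 * f + 1"
    and valid_trim_card_le: "card M \<le> card H"
proof -
  define R where "R = {1..n} - {i} - M"
  have M: "M \<subseteq> {1..n} - {i}" and cR: "card R = f"
    using trim unfolding valid_trim_def R_def by auto
  have fin: "finite M" "finite R" "finite ({1..n} - H)"
    using M finite_subset by (auto simp: R_def)
  have "card R = card ((H - {i} - M) \<union> (R - H))"
    using H i by (intro arg_cong[where f = card]) (auto simp: R_def)
  also have "\<dots> = card (H - {i} - M) + card (R - H)"
    using fin H by (intro card_Un_disjoint) (auto intro: finite_subset)
  finally have "card R = card (H - {i} - M) + card (R - H)" .
  moreover have "card ({1..n} - H) = card ((M - H) \<union> (R - H))"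
    using M i by (intro arg_cong[where f = card]) (auto simp: R_def)
  moreover have "\<dots> = card (M - H) + card (R - H)"
    using fin by (intro card_Un_disjoint) (auto simp: R_def)
  ultimately show "card (M - H) \<le> card (H - {i} - M)" "card (H - {i} - M) \<le> f"
    using byz cR by linarith+
  have "card ({1..n} - {i}) = n - 1" "1 \<le> n"
    using H i by auto
  then have "card M + f + 1 = n"
    using card_Diff_subset[OF fin(1) M] card_mono[OF _ M] cR by (simp add: R_def)
  moreover have "card H + card ({1..n} - H) = n"
    using card_Diff_subset[OF _ H] card_mono[OF _ H] finite_subset[OF H] by simp
  moreover have "card M = card (M \<inter> H) + card (M - H)"
    using fin(1) by (simp add: card_Int_Diff)
  ultimately show "n \<le> card (M \<inter> H) + 2 * f + 1" "card M \<le> card H"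
    using \<open>card (M - H) \<le> card (H - {i} - M)\<close> \<open>card (H - {i} - M) \<le> f\<close> byz by linarith+
qed

lemma exists_far_if_Max_dist_set_ge:
  assumes "finite S" "S \<noteq> {}" "\<And>j. j \<in> S \<Longrightarrow> closed (X j)" "\<And>j. j \<in> S \<Longrightarrow> y j \<in> X j"
    and "d \<le> Max ((\<lambda>j. dist_set w (X j)) ` S)"
  shows "\<exists>j\<in>S. d \<le> norm (y j - w)"
proof -
  have "Max ((\<lambda>j. dist_set w (X j)) ` S) \<in> (\<lambda>j. dist_set w (X j)) ` S"
    using assms(1,2) by (intro Max_in) auto
  then obtain j where j: "j \<in> S" "Max ((\<lambda>j. dist_set w (X j)) ` S) = dist_set w (X j)"
    by auto
  then have "d \<le> norm (w - y j)"
    using assms(3-5) dist_set_le_norm[of "X j" "y j" w] by auto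
  then show ?thesis
    using j(1) by (auto simp: norm_minus_commute)
qed

lemma sum_power2_norm_ge_if_far_subsets:
  fixes y :: "'b \<Rightarrow> 'a::real_normed_vector"
  assumes "finite K" "i \<notin> K" "0 \<le> d"
    and far: "\<And>S. S \<subseteq> insert i K \<Longrightarrow> S \<noteq> {} \<Longrightarrow> N \<le> int (card S) \<Longrightarrow>
        \<exists>j\<in>S. d \<le> norm (y j - y i)"
  shows "of_int (int (card K) - N + 2) * d\<^sup>2 \<le> (\<Sum>j\<in>K. (norm (y j - y i))\<^sup>2)"
proof (cases "d = 0")
  case True
  then show ?thesis by (simp add: sum_nonneg)
next
  case False
  define G where "G = {j \<in> K. d \<le> norm (y j - y i)}"
  have "G \<subseteq> K" by (auto simp: G_def)
  have "int (card (insert i (K - G))) < N"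
  proof (rule ccontr)
    assume "\<not> ?thesis"
    then have "N \<le> int (card (insert i (K - G)))" by simp
    then obtain j where "j \<in> insert i (K - G)" "d \<le> norm (y j - y i)"
      by (meson far Diff_subset insert_mono insert_not_empty)
    then show False
      using False \<open>0 \<le> d\<close> by (auto simp: G_def)
  qed
  moreover have "card (insert i (K - G)) = card K - card G + 1"
    using assms(1,2) \<open>G \<subseteq> K\<close> by (simp add: card_Diff_subset finite_subset)
  moreover have "card G \<le> card K"
    using assms(1) \<open>G \<subseteq> K\<close> by (simp add: card_mono)
  ultimately have "of_int (int (card K) - N + 2) * d\<^sup>2 \<le> real (card G) * d\<^sup>2"
    by (intro mult_right_mono) simp_all
  also have "\<dots> \<le> (\<Sum>j\<in>G. (norm (y j - y i))\<^sup>2)"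
    using sum_bounded_below[of G "d\<^sup>2" "\<lambda>j. (norm (y j - y i))\<^sup>2"] \<open>0 \<le> d\<close>
    by (simp add: G_def power_mono)
  also have "\<dots> \<le> (\<Sum>j\<in>K. (norm (y j - y i))\<^sup>2)"
    using assms(1) \<open>G \<subseteq> K\<close> by (intro sum_mono2) auto
  finally show ?thesis .
qed

lemma trimmed_byzantine_cost_le:
  fixes r y :: "'b \<Rightarrow> 'a::real_inner"
  assumes "finite B" "finite D" "card B \<le> card D" "card D \<le> f"
    and displaced: "\<And>j j'. j \<in> B \<Longrightarrow> j' \<in> D \<Longrightarrow> norm (r j - w) \<le> norm (y j' - w)"
  shows "(\<Sum>j\<in>B. 2 * inner (w - z) (r j - w)) + (\<Sum>j\<in>D. (norm (w - z))\<^sup>2 - (norm (y j - z))\<^sup>2)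
    \<le> 4 * real f * (norm (w - z))\<^sup>2"
proof -
  let ?a = "norm (w - z)"
  have "(\<Sum>j\<in>B. 2 * inner (w - z) (r j - w)) \<le> (\<Sum>j\<in>B. 2 * ?a * norm (r j - w))"
    by (intro sum_mono) (simp add: norm_cauchy_schwarz)
  also have "\<dots> \<le> (\<Sum>j\<in>D. 2 * ?a * norm (y j - w))"
    using assms(1-3) displaced by (intro sum_le_sum_if_card_le) (auto intro: mult_left_mono)
  finally have byzantine: "(\<Sum>j\<in>B. 2 * inner (w - z) (r j - w)) \<le> \<dots>" .
  have "?a\<^sup>2 - (norm (y j - z))\<^sup>2 + 2 * ?a * norm (y j - w) \<le> 4 * ?a\<^sup>2" for j
  proof -
    have "norm (y j - w) \<le> norm (y j - z) + ?a"
      using norm_triangle_ineq4[of "y j - z" "w - z"] by simp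
    then have "2 * ?a * norm (y j - w) \<le> 2 * ?a * (norm (y j - z) + ?a)"
      by (simp add: mult_left_mono)
    moreover have "0 \<le> (?a - norm (y j - z))\<^sup>2" by simp
    ultimately show ?thesis by (simp add: power2_eq_square algebra_simps)
  qed
  then have "(\<Sum>j\<in>D. ?a\<^sup>2 - (norm (y j - z))\<^sup>2) + (\<Sum>j\<in>D. 2 * ?a * norm (y j - w))
      \<le> real (card D) * (4 * ?a\<^sup>2)"
    using sum_bounded_above[of D _ "4 * ?a\<^sup>2"] by (simp add: sum.distrib[symmetric])
  also have "\<dots> \<le> real f * (4 * ?a\<^sup>2)"
    using assms(4) by (intro mult_right_mono) simp_all
  finally show ?thesis using byzantine by simp
qed

lemma sum_inner_split_kept_normal:
  fixes y r :: "'b \<Rightarrow> 'a::real_inner"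
  assumes "finite M" "finite H" "i \<notin> M"
    and received: "\<And>j. j \<in> H \<Longrightarrow> j \<noteq> i \<Longrightarrow> r j = y j"
  shows "2 * inner (y i - z) (\<Sum>j\<in>M. r j - y i)
    = (\<Sum>j\<in>H - {i}. (norm (y j - z))\<^sup>2 - (norm (y i - z))\<^sup>2)
      - (\<Sum>j\<in>M \<inter> H. (norm (y j - y i))\<^sup>2)
      + ((\<Sum>j\<in>M - H. 2 * inner (y i - z) (r j - y i))
         + (\<Sum>j\<in>H - {i} - M. (norm (y i - z))\<^sup>2 - (norm (y j - z))\<^sup>2))"
proof -
  let ?a = "\<lambda>j. norm (y j - z)"
  have "2 * inner (y i - z) (\<Sum>j\<in>M. r j - y i)
      = (\<Sum>j\<in>M \<inter> H. 2 * inner (y i - z) (r j - y i)) + (\<Sum>j\<in>M - H. 2 * inner (y i - z) (r j - y i))"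
    using assms(1) by (simp add: inner_sum_right sum_distrib_left sum.Int_Diff)
  also have "(\<Sum>j\<in>M \<inter> H. 2 * inner (y i - z) (r j - y i))
      = (\<Sum>j\<in>M \<inter> H. 2 * inner (y i - z) (y j - y i))"
    using received \<open>i \<notin> M\<close> by (intro sum.cong refl) (metis IntE)
  also have "\<dots> = (\<Sum>j\<in>M \<inter> H. (?a j)\<^sup>2 - (?a i)\<^sup>2) - (\<Sum>j\<in>M \<inter> H. (norm (y j - y i))\<^sup>2)"
    by (simp add: two_inner_eq_power2_norm_diff sum_subtractf)
  also have "(\<Sum>j\<in>M \<inter> H. (?a j)\<^sup>2 - (?a i)\<^sup>2)
      = (\<Sum>j\<in>H - {i}. (?a j)\<^sup>2 - (?a i)\<^sup>2) + (\<Sum>j\<in>H - {i} - M. (?a i)\<^sup>2 - (?a j)\<^sup>2)"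
  proof -
    have "(H - {i}) \<inter> M = M \<inter> H" using \<open>i \<notin> M\<close> by auto
    then show ?thesis
      using sum.Int_Diff[of "H - {i}" "\<lambda>j. (?a j)\<^sup>2 - (?a i)\<^sup>2" M] assms(2)
      by (simp add: sum_subtractf)
  qed
  finally show ?thesis by simp
qed

lemma sum_power2_norm_kept_normal_ge:
  fixes y r :: "nat \<Rightarrow> 'a::euclidean_space"
  assumes H: "H \<subseteq> {1..n}" and byz: "card ({1..n} - H) \<le> f" and i: "i \<in> H"
    and trim: "valid_trim n f i (y i) r M"
    and far: "\<And>S. S \<subseteq> H \<Longrightarrow> S \<noteq> {} \<Longrightarrow> int n - int k \<le> int (card S) \<Longrightarrow>
        \<exists>j\<in>S. \<mu> * norm (y i - z) \<le> norm (y j - y i)"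
    and "0 \<le> \<mu>"
  shows "\<mu>\<^sup>2 * (real k - 2 * real f + 1) * (norm (y i - z))\<^sup>2 \<le> (\<Sum>j\<in>M \<inter> H. (norm (y j - y i))\<^sup>2)"
proof -
  have "M \<subseteq> {1..n} - {i}" using trim unfolding valid_trim_def by auto
  then have "finite (M \<inter> H)" "i \<notin> M \<inter> H" by (auto intro: finite_subset)
  then have "of_int (int (card (M \<inter> H)) - (int n - int k) + 2) * (\<mu> * norm (y i - z))\<^sup>2
      \<le> (\<Sum>j\<in>M \<inter> H. (norm (y j - y i))\<^sup>2)"
    using \<open>0 \<le> \<mu>\<close> i by (intro sum_power2_norm_ge_if_far_subsets) (auto intro!: far)
  moreover have "real k - 2 * real f + 1 \<le> of_int (int (card (M \<inter> H)) - (int n - int k) + 2)"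
    using valid_trim_card_kept_normal_ge[OF H byz i trim] by simp
  ultimately have "(real k - 2 * real f + 1) * (\<mu> * norm (y i - z))\<^sup>2
      \<le> (\<Sum>j\<in>M \<inter> H. (norm (y j - y i))\<^sup>2)"
    by (meson mult_right_mono order_trans zero_le_power2)
  then show ?thesis
    by (simp add: power_mult_distrib mult_ac)
qed

lemma trimmed_sum_inner_le:
  fixes y r :: "nat \<Rightarrow> 'a::euclidean_space"
  assumes H: "H \<subseteq> {1..n}" and byz: "card ({1..n} - H) \<le> f" and i: "i \<in> H"
    and trim: "valid_trim n f i (y i) r M"
    and received: "\<And>j. j \<in> H \<Longrightarrow> j \<noteq> i \<Longrightarrow> r j = y j"
    and far: "\<And>S. S \<subseteq> H \<Longrightarrow> S \<noteq> {} \<Longrightarrow> int n - int k \<le> int (card S) \<Longrightarrow>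
        \<exists>j\<in>S. \<mu> * norm (y i - z) \<le> norm (y j - y i)"
    and "0 \<le> \<mu>"
  shows "2 * inner (y i - z) (\<Sum>j\<in>M. r j - y i)
    \<le> (\<Sum>j\<in>H - {i}. (norm (y j - z))\<^sup>2 - (norm (y i - z))\<^sup>2)
       - (\<mu>\<^sup>2 * (real k - 2 * real f + 1) - 4 * real f) * (norm (y i - z))\<^sup>2"
proof -
  have M: "M \<subseteq> {1..n} - {i}"
    and closer: "\<And>j j'. j \<in> M \<Longrightarrow> j' \<in> {1..n} - {i} - M \<Longrightarrow> norm (y i - r j) \<le> norm (y i - r j')"
    using trim unfolding valid_trim_def by auto
  have fin: "finite M" "finite H" and "i \<notin> M"
    using M H by (auto intro: finite_subset)
  have "(\<Sum>j\<in>M - H. 2 * inner (y i - z) (r j - y i))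
      + (\<Sum>j\<in>H - {i} - M. (norm (y i - z))\<^sup>2 - (norm (y j - z))\<^sup>2)
      \<le> 4 * real f * (norm (y i - z))\<^sup>2"
  proof (rule trimmed_byzantine_cost_le)
    show "card (M - H) \<le> card (H - {i} - M)" "card (H - {i} - M) \<le> f"
      using valid_trim_cards[OF H byz i trim] by simp_all
    show "norm (r j - y i) \<le> norm (y j' - y i)" if "j \<in> M - H" "j' \<in> H - {i} - M" for j j'
      using closer[of j j'] received[of j'] that H by (auto simp: norm_minus_commute)
  qed (use fin in simp_all)
  then show ?thesis
    using sum_inner_split_kept_normal[where y = y and r = r and z = z, OF fin \<open>i \<notin> M\<close> received]
      sum_power2_norm_kept_normal_ge[where k = k, OF H byz i trim far \<open>0 \<le> \<mu>\<close>]
    by (simp add: left_diff_distrib)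
qed

lemma power2_norm_trimmed_sum_le:
  fixes y r :: "nat \<Rightarrow> 'a::euclidean_space"
  assumes H: "H \<subseteq> {1..n}" and byz: "card ({1..n} - H) \<le> f" and i: "i \<in> H"
    and trim: "valid_trim n f i (y i) r M"
    and received: "\<And>j. j \<in> H \<Longrightarrow> j \<noteq> i \<Longrightarrow> r j = y j"
  shows "(norm (\<Sum>j\<in>M. r j - y i))\<^sup>2 \<le> 4 * (real (card H))\<^sup>2 * (\<Sum>j\<in>H. (norm (y j - z))\<^sup>2)"
proof -
  define s where "s = sqrt (\<Sum>j\<in>H. (norm (y j - z))\<^sup>2)"
  have M: "M \<subseteq> {1..n} - {i}"
    and closer: "\<And>j j'. j \<in> M \<Longrightarrow> j' \<in> {1..n} - {i} - M \<Longrightarrow> norm (y i - r j) \<le> norm (y i - r j')"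
    using trim unfolding valid_trim_def by auto
  have "finite H" using H finite_subset by blast
  have bound: "norm (y j - z) \<le> s" if "j \<in> H" for j
    using member_le_sum[of j H "\<lambda>j. (norm (y j - z))\<^sup>2"] \<open>finite H\<close> that
    unfolding s_def by (metis real_sqrt_abs real_sqrt_le_mono abs_norm_cancel zero_le_power2)
  have near: "norm (y j - y i) \<le> 2 * s" if "j \<in> H" for j
  proof -
    have "norm (y j - y i) \<le> norm (y j - z) + norm (y i - z)"
      using norm_triangle_ineq4[of "y j - z" "y i - z"] by simp
    then show ?thesis using bound[OF that] bound[OF i] by linarith
  qed
  have "norm (r j - y i) \<le> 2 * s" if "j \<in> M" for j
  proof (cases "j \<in> H")
    case True
    moreover have "j \<noteq> i" using M that by auto
    ultimately show ?thesis using near received by simp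
  next
    case False
    then have "card (M - H) \<noteq> 0"
      using that M by (auto simp: card_eq_0_iff intro: finite_subset)
    then have "H - {i} - M \<noteq> {}"
      using valid_trim_card_byzantine_le[OF H byz i trim] by (metis card.empty le_zero_eq)
    then obtain j' where j': "j' \<in> H - {i} - M" by blast
    then have "norm (r j - y i) \<le> norm (y j' - y i)"
      using closer[OF that, of j'] received[of j'] H by (auto simp: norm_minus_commute)
    also have "\<dots> \<le> 2 * s" using near j' by blast
    finally show ?thesis .
  qed
  then have "norm (\<Sum>j\<in>M. r j - y i) \<le> real (card M) * (2 * s)"
    using norm_sum[of "\<lambda>j. r j - y i" M] sum_bounded_above[of M "\<lambda>j. norm (r j - y i)" "2 * s"]
    by fastforce
  also have "\<dots> \<le> real (card H) * (2 * s)"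
    using valid_trim_card_le[OF H byz i trim] by (intro mult_right_mono) (simp_all add: s_def sum_nonneg)
  finally have "(norm (\<Sum>j\<in>M. r j - y i))\<^sup>2 \<le> (real (card H) * (2 * s))\<^sup>2"
    by (simp add: power_mono)
  then show ?thesis
    by (simp add: s_def power_mult_distrib sum_nonneg)
qed

lemma trimmed_projected_step_le:
  fixes y r :: "nat \<Rightarrow> 'a::euclidean_space"
  assumes H: "H \<subseteq> {1..n}" and byz: "card ({1..n} - H) \<le> f" and i: "i \<in> H"
    and trim: "valid_trim n f i (y i) r M"
    and received: "\<And>j. j \<in> H \<Longrightarrow> j \<noteq> i \<Longrightarrow> r j = y j"
    and far: "\<And>S. S \<subseteq> H \<Longrightarrow> S \<noteq> {} \<Longrightarrow> int n - int k \<le> int (card S) \<Longrightarrow>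
        \<exists>j\<in>S. \<mu> * norm (y i - z) \<le> norm (y j - y i)"
    and "0 \<le> \<mu>" and C: "convex C" "closed C" "z \<in> C" and "0 \<le> \<alpha>"
  shows "(norm (proj C (y i + \<alpha> *\<^sub>R (\<Sum>j\<in>M. r j - y i)) - z))\<^sup>2
    \<le> (norm (y i - z))\<^sup>2
       + \<alpha> * ((\<Sum>j\<in>H - {i}. (norm (y j - z))\<^sup>2 - (norm (y i - z))\<^sup>2)
               - (\<mu>\<^sup>2 * (real k - 2 * real f + 1) - 4 * real f) * (norm (y i - z))\<^sup>2)
       + \<alpha>\<^sup>2 * (4 * (real (card H))\<^sup>2 * (\<Sum>j\<in>H. (norm (y j - z))\<^sup>2))"
  using power2_norm_proj_step_le[OF C, of "y i" \<alpha> "\<Sum>j\<in>M. r j - y i"]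
    mult_left_mono[OF trimmed_sum_inner_le[where k = k, OF H byz i trim received far \<open>0 \<le> \<mu>\<close>] \<open>0 \<le> \<alpha>\<close>]
    mult_left_mono[OF power2_norm_trimmed_sum_le[OF H byz i trim received], of "\<alpha>\<^sup>2" z]
  by simp

lemma trimmed_round_contracts:
  fixes y y' :: "nat \<Rightarrow> 'a::euclidean_space" and r :: "nat \<Rightarrow> nat \<Rightarrow> 'a"
  assumes H: "H \<subseteq> {1..n}" and byz: "card ({1..n} - H) \<le> f"
    and trim: "\<And>i. i \<in> H \<Longrightarrow> valid_trim n f i (y i) (r i) (M i)"
    and received: "\<And>i j. i \<in> H \<Longrightarrow> j \<in> H \<Longrightarrow> j \<noteq> i \<Longrightarrow> r i j = y j"
    and far: "\<And>i S. i \<in> H \<Longrightarrow> S \<subseteq> H \<Longrightarrow> S \<noteq> {} \<Longrightarrow> int n - int k \<le> int (card S) \<Longrightarrow>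
        \<exists>j\<in>S. \<mu> * norm (y i - z) \<le> norm (y j - y i)"
    and X: "\<And>i. i \<in> H \<Longrightarrow> convex (X i)" "\<And>i. i \<in> H \<Longrightarrow> closed (X i)" "\<And>i. i \<in> H \<Longrightarrow> z \<in> X i"
    and update: "\<And>i. i \<in> H \<Longrightarrow> y' i = proj (X i) (y i + \<alpha> *\<^sub>R (\<Sum>j\<in>M i. r i j - y i))"
    and "0 \<le> \<mu>" "0 \<le> \<alpha>"
  shows "(\<Sum>i\<in>H. (norm (y' i - z))\<^sup>2)
    \<le> (1 - \<alpha> * (\<mu>\<^sup>2 * (real k - 2 * real f + 1) - 4 * real f - 4 * \<alpha> * real (card H) ^ 3))
       * (\<Sum>i\<in>H. (norm (y i - z))\<^sup>2)"
proof -
  define c where "c = \<mu>\<^sup>2 * (real k - 2 * real f + 1) - 4 * real f"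
  define V where "V = (\<Sum>i\<in>H. (norm (y i - z))\<^sup>2)"
  define h where "h = real (card H)"
  have "(\<Sum>i\<in>H. (norm (y' i - z))\<^sup>2)
      \<le> (\<Sum>i\<in>H. (norm (y i - z))\<^sup>2
           + \<alpha> * ((\<Sum>j\<in>H - {i}. (norm (y j - z))\<^sup>2 - (norm (y i - z))\<^sup>2) - c * (norm (y i - z))\<^sup>2)
           + \<alpha>\<^sup>2 * (4 * h\<^sup>2 * V))"
    unfolding c_def V_def h_def
    using trimmed_projected_step_le[OF H byz _ trim received far, where k = k]
      X \<open>0 \<le> \<mu>\<close> \<open>0 \<le> \<alpha>\<close> by (intro sum_mono) (simp add: update)
  also have "\<dots> = (1 - \<alpha> * c) * V + h * (\<alpha>\<^sup>2 * (4 * h\<^sup>2 * V))"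
    unfolding V_def h_def using finite_subset[OF H] by (rule sum_with_pairwise_diffs_eq) simp
  also have "\<dots> = (1 - \<alpha> * (c - 4 * \<alpha> * h ^ 3)) * V"
    by (simp add: power2_eq_square power3_eq_cube algebra_simps)
  finally show ?thesis
    by (simp add: c_def V_def h_def)
qed

theorem theorem2:
  fixes n f k :: nat
    and H :: "nat set"
    and X :: "nat \<Rightarrow> 'a::euclidean_space set"
    and x :: "nat \<Rightarrow> nat \<Rightarrow> 'a"
    and msg :: "nat \<Rightarrow> nat \<Rightarrow> nat \<Rightarrow> 'a"
    and M :: "nat \<Rightarrow> nat \<Rightarrow> nat set"
    and \<alpha> \<mu> :: real
    and xstar :: 'a
  assumes H_sub: "H \<subseteq> {1..n}"
    and byz: "card ({1..n} - H) \<le> f"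
    and X_ne: "\<And>i. i \<in> H \<Longrightarrow> X i \<noteq> {}"
    and X_closed: "\<And>i. i \<in> H \<Longrightarrow> closed (X i)"
    and X_convex: "\<And>i. i \<in> H \<Longrightarrow> convex (X i)"
    and init: "\<And>i. i \<in> H \<Longrightarrow> x 0 i \<in> X i"
    and msg_normal: "\<And>t i j. i \<in> H \<Longrightarrow> j \<in> H \<Longrightarrow> j \<noteq> i \<Longrightarrow> msg t j i = x t j"
    and trim: "\<And>t i. i \<in> H \<Longrightarrow> valid_trim n f i (x t i) (\<lambda>j. msg t j i) (M t i)"
    and update: "\<And>t i. i \<in> H \<Longrightarrow>
        x (Suc t) i = proj (X i) (x t i + \<alpha> *\<^sub>R (\<Sum>j\<in>M t i. msg t j i - x t i))"
    and alpha_pos: "\<alpha> > 0"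
    and singleton: "(\<Inter>i\<in>H. X i) = {xstar}"
    and redundant: "k_redundant n k H X"
    and mu_pos: "\<mu> > 0"
    and mu_bound: "\<And>y S. S \<subseteq> H \<Longrightarrow> S \<noteq> {} \<Longrightarrow> int (card S) \<ge> int n - int k \<Longrightarrow>
        Max ((\<lambda>i. dist_set y (X i)) ` S) \<ge> \<mu> * dist_set y (\<Inter>i\<in>S. X i)"
    and k_bound: "real k > 4 * real f / \<mu>\<^sup>2 + 2 * real f - 1"
    and alpha_bound: "\<alpha> < (\<mu>\<^sup>2 * real k - 2 * real f * \<mu>\<^sup>2 - 4 * real f + \<mu>\<^sup>2) / (4 * real (card H) ^ 3)"
  shows "\<exists>\<rho>::real. 0 < \<rho> \<and> \<rho> < 1 \<and>
    (\<forall>t. (\<Sum>i\<in>H. (norm (x t i - xstar))\<^sup>2) \<le> \<rho> ^ t * (\<Sum>i\<in>H. (norm (x 0 i - xstar))\<^sup>2))"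
proof -
  define V where "V t = (\<Sum>i\<in>H. (norm (x t i - xstar))\<^sup>2)" for t
  define c where "c = \<mu>\<^sup>2 * (real k - 2 * real f + 1) - 4 * real f"
  define h where "h = real (card H)"
  have "finite H" using H_sub finite_subset by blast
  have xstar_in: "xstar \<in> X i" if "i \<in> H" for i using singleton that by blast
  have in_X: "x t i \<in> X i" if "i \<in> H" for t i
    using init update proj_in[OF X_closed X_ne] that by (cases t) auto
  have far: "\<exists>j\<in>S. \<mu> * norm (x t i - xstar) \<le> norm (x t j - x t i)"
    if "S \<subseteq> H" "S \<noteq> {}" "int n - int k \<le> int (card S)" for t i S
  proof (rule exists_far_if_Max_dist_set_ge)
    have "(\<Inter>j\<in>S. X j) = {xstar}"
      using redundant singleton that unfolding k_redundant_def by auto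
    then show "\<mu> * norm (x t i - xstar) \<le> Max ((\<lambda>j. dist_set (x t i) (X j)) ` S)"
      using mu_bound[OF that] by (simp add: dist_set_singleton)
  qed (use that \<open>finite H\<close> in_X X_closed in \<open>auto intro: finite_subset\<close>)
  have step: "V (Suc t) \<le> (1 - \<alpha> * (c - 4 * \<alpha> * h ^ 3)) * V t" for t
    unfolding V_def c_def h_def
    by (rule trimmed_round_contracts[where r = "\<lambda>i j. msg t j i" and k = k])
      (use H_sub byz trim msg_normal update X_convex X_closed xstar_in mu_pos alpha_pos
        in \<open>auto intro!: far\<close>)
  have "4 * \<alpha> * h ^ 3 < c"
    using alpha_bound alpha_pos by (cases "h = 0") (auto simp: c_def h_def field_simps)
  then have "1 - \<alpha> * (c - 4 * \<alpha> * h ^ 3) < 1"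
    using alpha_pos by simp
  moreover have "0 \<le> V t" for t
    unfolding V_def by (simp add: sum_nonneg)
  ultimately show ?thesis
    using geometric_decay_if_contraction[of V, OF step] unfolding V_def by blast
qed

end
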